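(* Consider the linear system $x_{t+1}=Ax_t+Bu_t$ in closed loop with the Learning Model Predictive Control (LMPC) policy with prediction horizon $N$ described in the context, and let the stage-cost assumption and the initial-trajectory assumption described in the context hold. If two consecutive iterations $j-1$ and $j$ ($j\ge1$) attain the same cost, $J^{j-1}_{0\to\infty}(x_S)=J^j_{0\to\infty}(x_S)$, then the associated closed-loop state trajectories coincide: $\boldsymbol{x}^{j-1}=\boldsymbol{x}^j$.
   Context: System: $x_{t+1}=Ax_t+Bu_t$, $x_t\in\mathbb{R}^n$, $u_t\in\mathbb{R}^d$, with polyhedral constraints $x_t\in\mathcal{X}=\{x: F_x x\le b_x\}$, $u_t\in\mathcal{U}=\{u:F_u u\le b_u\}$, both containing the origin in their interior. Stage-cost assumption: $h(x,u)=x^\top Qx+u^\top Ru$ with $Q\succeq 0$, $R\succ 0$. A fixed initial condition $x_S$ is given. Stored data: at each iteration $j=0,1,2,\ldots$ a closed-loop trajectory $\boldsymbol{x}^j=[x^j_0,x^j_1,\ldots]$, $\boldsymbol{u}^j=[u^j_0,u^j_1,\ldots]$ with $x_0^j=x_S$ is stored. Initial-trajectory assumption: $\boldsymbol{x}^0,\boldsymbol{u}^0$ satisfy $x^0_{t+1}=Ax^0_t+Bu^0_t$, $x^0_t\in\mathcal{X}$, $u^0_t\in\mathcal{U}$ for all $t\ge0$, $x^0_t\to0$, $u^0_t\to0$, and $\sum_{t=0}^\infty h(x_t^0,u_t^0)<\infty$. Cost-to-go of stored states: $J^i_{k\to\infty}(x^i_k)=\sum_{l=k}^\infty h(x^i_l,u^i_l)$.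 Convex safe set $\mathcal{CS}^j$ = the smallest closed convex set containing $\{x^i_t: 0\le i\le j,\ t\ge 0\}$. $V$-function: $V^j(x)=\min_{\gamma^i_k\ge0}\sum_{i=0}^j\sum_{k=0}^\infty\gamma^i_k J^i_{k\to\infty}(x^i_k)$ subject to $\sum_{i,k}\gamma^i_k x^i_k=x$, $\sum_{i,k}\gamma^i_k=1$. LMPC policy at iteration $j\ge1$: at time $t$, with current state $x^j_t$, solve $J^{\mathrm{LMPC},j}_{t\to t+N}(x^j_t)=\min_{u_{t|t},\ldots,u_{t+N-1|t}}\sum_{k=t}^{t+N-1}h(x_{k|t},u_{k|t})+V^{j-1}(x_{t+N|t})$ subject to $x_{k+1|t}=Ax_{k|t}+Bu_{k|t}$, $x_{k|t}\in\mathcal{X}$, $u_{k|t}\in\mathcal{U}$ for $k=t,\ldots,t+N-1$, $x_{t+N|t}\in\mathcal{CS}^{j-1}$, $x_{t|t}=x^j_t$; apply the first optimal input $u^j_t=u^{j,*}_{t|t}$, so $x^j_{t+1}=Ax^j_t+Bu^j_t$, and repeat at $t+1$ (receding horizon). The iteration cost is $J^j_{0\to\infty}(x_S)=\sum_{t=0}^\infty h(x^j_t,u^j_t)$ (with $J^0_{0\to\infty}(x_S)=\sum_t h(x^0_t,u^0_t)$). *)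

theory Defs
  imports "HOL-Analysis.Analysis"
begin

definition polyhedron :: "real^'n^'m \<Rightarrow> real^'m \<Rightarrow> (real^'n) set" where
  "polyhedron F b = {z. \<forall>i. (F *v z) $ i \<le> b $ i}"

definition stage_cost :: "real^'n^'n \<Rightarrow> real^'d^'d \<Rightarrow> real^'n \<Rightarrow> real^'d \<Rightarrow> real" where
  "stage_cost Q R x u = x \<bullet> (Q *v x) + u \<bullet> (R *v u)"

definition psd :: "real^'n^'n \<Rightarrow> bool" where
  "psd M \<longleftrightarrow> transpose M = M \<and> (\<forall>x. 0 \<le> x \<bullet> (M *v x))"

definition pd :: "real^'n^'n \<Rightarrow> bool" where
  "pd M \<longleftrightarrow> transpose M = M \<and> (\<forall>x. x \<noteq> 0 \<longrightarrow> 0 < x \<bullet> (M *v x))"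

definition iter_cost ::
  "real^'n^'n \<Rightarrow> real^'d^'d \<Rightarrow> (nat \<Rightarrow> nat \<Rightarrow> real^'n) \<Rightarrow> (nat \<Rightarrow> nat \<Rightarrow> real^'d) \<Rightarrow> nat \<Rightarrow> ennreal" where
  "iter_cost Q R xs us i = (\<Sum>t. ennreal (stage_cost Q R (xs i t) (us i t)))"

definition cost_to_go ::
  "real^'n^'n \<Rightarrow> real^'d^'d \<Rightarrow> (nat \<Rightarrow> nat \<Rightarrow> real^'n) \<Rightarrow> (nat \<Rightarrow> nat \<Rightarrow> real^'d) \<Rightarrow> nat \<Rightarrow> nat \<Rightarrow> ennreal" where
  "cost_to_go Q R xs us i k = (\<Sum>l. ennreal (stage_cost Q R (xs i (l + k)) (us i (l + k))))"

definition safe_set :: "(nat \<Rightarrow> nat \<Rightarrow> real^'n) \<Rightarrow> nat \<Rightarrow> (real^'n) set" where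
  "safe_set xs j = closure (convex hull {xs i t | i t. i \<le> j})"

text \<open>V-function V^j(x) (infimum over admissible multipliers; +inf if none).\<close>
definition Vfun ::
  "real^'n^'n \<Rightarrow> real^'d^'d \<Rightarrow> (nat \<Rightarrow> nat \<Rightarrow> real^'n) \<Rightarrow> (nat \<Rightarrow> nat \<Rightarrow> real^'d) \<Rightarrow> nat \<Rightarrow> real^'n \<Rightarrow> ennreal" where
  "Vfun Q R xs us j x =
     (INF \<gamma> \<in> {\<gamma> :: nat \<Rightarrow> nat \<Rightarrow> real.
                 (\<forall>i k. 0 \<le> \<gamma> i k)
               \<and> ((\<lambda>(i,k). \<gamma> i k) has_sum 1) ({..j} \<times> UNIV)
               \<and> ((\<lambda>(i,k). \<gamma> i k *\<^sub>R xs i k) has_sum x) ({..j} \<times> UNIV)}.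
        (\<Sum>\<^sub>\<infinity>(i,k)\<in>{..j} \<times> UNIV. ennreal (\<gamma> i k) * cost_to_go Q R xs us i k))"

fun pred_state :: "real^'n^'n \<Rightarrow> real^'d^'n \<Rightarrow> real^'n \<Rightarrow> (nat \<Rightarrow> real^'d) \<Rightarrow> nat \<Rightarrow> real^'n" where
  "pred_state A B x v 0 = x"
| "pred_state A B x v (Suc k) = A *v pred_state A B x v k + B *v v k"

text \<open>Feasibility of input sequence v (entries v 0 .. v (N-1) used) for the LMPC problem at x, iteration j.\<close>
definition lmpc_feasible ::
  "real^'n^'n \<Rightarrow> real^'d^'n \<Rightarrow> (real^'n) set \<Rightarrow> (real^'d) set \<Rightarrow> nat \<Rightarrow>
   (nat \<Rightarrow> nat \<Rightarrow> real^'n) \<Rightarrow> nat \<Rightarrow> real^'n \<Rightarrow> (nat \<Rightarrow> real^'d) \<Rightarrow> bool" where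
  "lmpc_feasible A B X U N xs j x v \<longleftrightarrow>
     (\<forall>k<N. pred_state A B x v k \<in> X \<and> v k \<in> U)
   \<and> pred_state A B x v N \<in> safe_set xs (j - 1)"

definition lmpc_cost ::
  "real^'n^'n \<Rightarrow> real^'d^'n \<Rightarrow> real^'n^'n \<Rightarrow> real^'d^'d \<Rightarrow> nat \<Rightarrow>
   (nat \<Rightarrow> nat \<Rightarrow> real^'n) \<Rightarrow> (nat \<Rightarrow> nat \<Rightarrow> real^'d) \<Rightarrow> nat \<Rightarrow> real^'n \<Rightarrow> (nat \<Rightarrow> real^'d) \<Rightarrow> ennreal" where
  "lmpc_cost A B Q R N xs us j x v =
     (\<Sum>k<N. ennreal (stage_cost Q R (pred_state A B x v k) (v k)))
     + Vfun Q R xs us (j - 1) (pred_state A B x v N)"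

definition lmpc_optimal ::
  "real^'n^'n \<Rightarrow> real^'d^'n \<Rightarrow> (real^'n) set \<Rightarrow> (real^'d) set \<Rightarrow> real^'n^'n \<Rightarrow> real^'d^'d \<Rightarrow> nat \<Rightarrow>
   (nat \<Rightarrow> nat \<Rightarrow> real^'n) \<Rightarrow> (nat \<Rightarrow> nat \<Rightarrow> real^'d) \<Rightarrow> nat \<Rightarrow> real^'n \<Rightarrow> (nat \<Rightarrow> real^'d) \<Rightarrow> bool" where
  "lmpc_optimal A B X U Q R N xs us j x v \<longleftrightarrow>
     lmpc_feasible A B X U N xs j x v
   \<and> (\<forall>w. lmpc_feasible A B X U N xs j x w \<longrightarrow>
          lmpc_cost A B Q R N xs us j x v \<le> lmpc_cost A B Q R N xs us j x w)"

end

theory Submission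
  imports Defs
begin

(*
  Let J(x) be the optimal value of the LMPC problem of iteration j. Along the closed loop of
  iteration j it decreases at least by the stage cost: if z is the terminal predicted state, the
  multipliers realising V^(j-1)(z), shifted one step along the stored trajectories, represent
  A z + B u for u the correspondingly averaged stored input, and Jensen's inequality for the
  convex stage cost bounds h(z, u). (The average exists because the stored inputs are bounded, by R > 0
  and the finiteness of the earlier iteration costs.) Telescoping, the cost-to-go of iteration j
  from time t is at most J(x^j_t), whereas the tail of iteration j-1 from the same state is a
  feasible plan costing at most the cost-to-go of iteration j-1. If both iterations have the same
  cost and agree up to time t, these cost-to-go values coincide, so that tail is optimal as well.
  Since R > 0 and V^(j-1) is convex, the LMPC cost is strictly convex in the first input, hence
  u^j_t = u^(j-1)_t; induction on t gives x^j = x^(j-1).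
*)

section \<open>Quadratic forms\<close>

lemma psd_inner_commute: "psd M \<Longrightarrow> x \<bullet> (M *v y) = y \<bullet> (M *v x)"
  unfolding psd_def by (metis dot_lmul_matrix inner_commute vector_transpose_matrix)

lemma pd_imp_psd: "pd M \<Longrightarrow> psd M"
  unfolding pd_def psd_def by (metis inner_zero_left matrix_vector_mult_0_right order_le_less)

lemma psd_quadratic_nonneg: "psd M \<Longrightarrow> 0 \<le> x \<bullet> (M *v x)"
  unfolding psd_def by blast

lemma stage_cost_nonneg: "psd Q \<Longrightarrow> pd R \<Longrightarrow> 0 \<le> stage_cost Q R x u"
  unfolding stage_cost_def by (metis add_nonneg_nonneg psd_quadratic_nonneg pd_imp_psd)

lemma psd_quadratic_expansion:
  assumes "psd M"
  shows "x \<bullet> (M *v x) = z \<bullet> (M *v z) + 2 * ((M *v z) \<bullet> (x - z)) + (x - z) \<bullet> (M *v (x - z))"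
  using psd_inner_commute[OF assms, of x z]
  by (simp add: matrix_vector_mult_diff_distrib inner_diff_left inner_diff_right inner_commute algebra_simps)

lemma psd_quadratic_midpoint:
  assumes "psd M"
  shows "((1/2) *\<^sub>R (a + b)) \<bullet> (M *v ((1/2) *\<^sub>R (a + b))) =
     (a \<bullet> (M *v a) + b \<bullet> (M *v b)) / 2 - ((a - b) \<bullet> (M *v (a - b))) / 4"
proof -
  have sym: "a \<bullet> (M *v b) = b \<bullet> (M *v a)" by (rule psd_inner_commute[OF assms])
  have "((1/2) *\<^sub>R (a + b)) \<bullet> (M *v ((1/2) *\<^sub>R (a + b))) = ((a + b) \<bullet> (M *v (a + b))) / 4"
    by (simp add: matrix_vector_mult_scaleR)
  moreover have "(a + b) \<bullet> (M *v (a + b)) = a \<bullet> (M *v a) + b \<bullet> (M *v b) + 2 * (a \<bullet> (M *v b))"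
    using sym by (simp add: matrix_vector_right_distrib inner_add_left inner_add_right)
  moreover have "(a - b) \<bullet> (M *v (a - b)) = a \<bullet> (M *v a) + b \<bullet> (M *v b) - 2 * (a \<bullet> (M *v b))"
    using sym by (simp add: matrix_vector_mult_diff_distrib inner_diff_left inner_diff_right)
  ultimately show ?thesis by argo
qed

lemma stage_cost_midpoint:
  assumes "psd Q" "pd R"
  shows "stage_cost Q R ((1/2) *\<^sub>R (x1 + x2)) ((1/2) *\<^sub>R (u1 + u2)) =
    (stage_cost Q R x1 u1 + stage_cost Q R x2 u2) / 2
    - ((x1 - x2) \<bullet> (Q *v (x1 - x2)) + (u1 - u2) \<bullet> (R *v (u1 - u2))) / 4"
  unfolding stage_cost_def
  using psd_quadratic_midpoint[OF assms(1), of x1 x2] psd_quadratic_midpoint[OF pd_imp_psd[OF assms(2)], of u1 u2]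
  by argo

lemma pd_quadratic_lower_bound:
  assumes "pd (R::real^'d^'d)"
  obtains c where "0 < c" "\<And>u. c * (norm u)^2 \<le> u \<bullet> (R *v u)"
proof -
  let ?S = "sphere (0::real^'d) 1"
  obtain e :: "real^'d" where "norm e = 1" using vector_choose_size[of 1] by auto
  then have "?S \<noteq> {}" by auto
  moreover have "continuous_on ?S (\<lambda>u. u \<bullet> (R *v u))"
    by (intro continuous_on_inner continuous_on_id linear_continuous_on matrix_vector_mul_bounded_linear)
  ultimately obtain u0 where u0: "u0 \<in> ?S" "\<And>y. y \<in> ?S \<Longrightarrow> u0 \<bullet> (R *v u0) \<le> y \<bullet> (R *v y)"
    using continuous_attains_inf[OF compact_sphere] by blast
  have pos: "0 < u0 \<bullet> (R *v u0)"
    using assms u0(1) unfolding pd_def by (metis mem_sphere_0 norm_zero zero_neq_one)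
  have "u0 \<bullet> (R *v u0) * (norm u)^2 \<le> u \<bullet> (R *v u)" for u
  proof (cases "u = 0")
    case False
    let ?y = "(1 / norm u) *\<^sub>R u"
    have "u0 \<bullet> (R *v u0) \<le> ?y \<bullet> (R *v ?y)" using False u0(2)[of ?y] by simp
    also have "\<dots> = (u \<bullet> (R *v u)) / (norm u)^2"
      by (simp add: matrix_vector_mult_scaleR power2_eq_square)
    finally show ?thesis using False by (simp add: pos_le_divide_eq)
  qed simp
  with pos show thesis by (rule that)
qed

lemma psd_quadratic_jensen:
  fixes y :: "'i \<Rightarrow> real^'n"
  assumes M: "psd M" and nonneg: "\<And>p. p \<in> I \<Longrightarrow> 0 \<le> g p" and g1: "(g has_sum 1) I"
    and mean: "((\<lambda>p. g p *\<^sub>R y p) has_sum w) I"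
    and summable: "(\<lambda>p. g p * (y p \<bullet> (M *v y p))) summable_on I"
  shows "w \<bullet> (M *v w) \<le> (\<Sum>\<^sub>\<infinity>p\<in>I. g p * (y p \<bullet> (M *v y p)))"
proof -
  let ?c = "M *v w"
  let ?tangent = "\<lambda>p. g p * (w \<bullet> ?c) + 2 * (?c \<bullet> (g p *\<^sub>R y p)) + (-2) * (g p * (?c \<bullet> w))"
  have "(?tangent has_sum (1 * (w \<bullet> ?c) + 2 * (?c \<bullet> w) + (-2) * (1 * (?c \<bullet> w)))) I"
    by (intro has_sum_add has_sum_cmult_left has_sum_cmult_right g1
        has_sum_bounded_linear[OF bounded_linear_inner_right mean])
  then have tangent: "(?tangent has_sum w \<bullet> ?c) I"
    by (simp add: inner_commute)
  have "?tangent p \<le> g p * (y p \<bullet> (M *v y p))" if "p \<in> I" for p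
  proof -
    have "w \<bullet> ?c + 2 * (?c \<bullet> (y p - w)) \<le> y p \<bullet> (M *v y p)"
      using psd_quadratic_expansion[OF M, of "y p" w] psd_quadratic_nonneg[OF M, of "y p - w"] by argo
    then have "g p * (w \<bullet> ?c + 2 * (?c \<bullet> (y p - w))) \<le> g p * (y p \<bullet> (M *v y p))"
      using nonneg[OF that] by (rule mult_left_mono)
    then show ?thesis by (simp add: inner_diff_right algebra_simps)
  qed
  then show ?thesis using has_sum_mono[OF tangent has_sum_infsum[OF summable]] by blast
qed

section \<open>Unordered sums\<close>

lemma ennreal_infsum_finite_real:
  fixes f :: "'a \<Rightarrow> real"
  assumes nonneg: "\<And>x. x \<in> A \<Longrightarrow> 0 \<le> f x"
    and finite: "(\<Sum>\<^sub>\<infinity>x\<in>A. ennreal (f x)) \<noteq> top"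
  shows "f summable_on A" "(\<Sum>\<^sub>\<infinity>x\<in>A. ennreal (f x)) = ennreal (\<Sum>\<^sub>\<infinity>x\<in>A. f x)"
proof -
  let ?T = "\<Sum>\<^sub>\<infinity>x\<in>A. ennreal (f x)"
  have "sum f F \<le> enn2real ?T" if "finite F" "F \<subseteq> A" for F
  proof -
    have "ennreal (sum f F) = (\<Sum>x\<in>F. ennreal (f x))"
      using nonneg that by (auto simp: sum_ennreal subset_iff)
    also have "\<dots> = (\<Sum>\<^sub>\<infinity>x\<in>F. ennreal (f x))"
      using that by simp
    also have "\<dots> \<le> ?T"
      using that by (intro infsum_mono_neutral) (auto simp: nonneg_summable_on_complete)
    finally show ?thesis
      using finite nonneg that by (metis enn2real_ennreal enn2real_mono sum_nonneg subsetD top.not_eq_extremum)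
  qed
  then show summable: "f summable_on A"
    using nonneg by (intro nonneg_bdd_above_summable_on) (auto simp: bdd_above_def)
  have "infsum (ennreal \<circ> f) A = ennreal (infsum f A)"
    by (rule infsum_comm_additive_general)
       (use nonneg summable in \<open>auto simp: sum_ennreal subset_iff\<close>)
  then show "?T = ennreal (\<Sum>\<^sub>\<infinity>x\<in>A. f x)" by (simp add: o_def)
qed

lemma infsum_cmult_right_ennreal:
  fixes f :: "'a \<Rightarrow> ennreal"
  assumes "c < top"
  shows "(\<Sum>\<^sub>\<infinity>x\<in>A. c * f x) = c * (\<Sum>\<^sub>\<infinity>x\<in>A. f x)"
proof -
  have "infsum ((\<lambda>x. c * x) \<circ> f) A = c * infsum f A"
    by (rule infsum_comm_additive_general)
       (auto simp: sum_distrib_left isCont_def nonneg_summable_on_complete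
             intro!: ennreal_tendsto_cmult[OF assms] tendsto_ident_at)
  then show ?thesis by (simp add: o_def)
qed

lemma infsum_add_ennreal:
  fixes f g :: "'a \<Rightarrow> ennreal"
  shows "(\<Sum>\<^sub>\<infinity>x\<in>A. f x + g x) = (\<Sum>\<^sub>\<infinity>x\<in>A. f x) + (\<Sum>\<^sub>\<infinity>x\<in>A. g x)"
  by (simp add: infsum_add nonneg_summable_on_complete)

lemma has_sum_single_support:
  assumes "a \<in> I" "\<And>x. x \<in> I \<Longrightarrow> x \<noteq> a \<Longrightarrow> f x = 0"
  shows "(f has_sum f a) I"
proof -
  have "(f has_sum f a) {a}" using has_sum_finite[of "{a}" f] by simp
  then show ?thesis by (subst (asm) has_sum_cong_neutral[where T=I and g=f]) (use assms in auto)
qed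

lemma has_sum_Times_shift:
  fixes f :: "'i \<Rightarrow> nat \<Rightarrow> 'b::{comm_monoid_add,topological_space}"
  assumes "((\<lambda>(i,k). f i k) has_sum s) (I \<times> UNIV)"
  shows "((\<lambda>(i,k). if k = 0 then 0 else f i (k - 1)) has_sum s) (I \<times> UNIV)"
proof -
  let ?g = "\<lambda>(i,k). if k = 0 then 0 else f i (k - 1)"
  have "((\<lambda>(i,k). f i k) has_sum s) (I \<times> UNIV) \<longleftrightarrow> (?g has_sum s) (I \<times> {k. k \<noteq> 0})"
    by (rule has_sum_reindex_bij_witness[where i="\<lambda>(i,k). (i, k - 1)" and j="\<lambda>(i,k). (i, Suc k)"])
       auto
  with assms have "(?g has_sum s) (I \<times> {k. k \<noteq> 0})" by blast
  then show ?thesis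
    by (subst (asm) has_sum_cong_neutral[where T="I \<times> UNIV" and g="?g"]) (auto split: if_splits)
qed

lemma infsum_Times_shift_ennreal:
  fixes f :: "'i \<Rightarrow> nat \<Rightarrow> ennreal"
  shows "(\<Sum>\<^sub>\<infinity>(i,k)\<in>I \<times> UNIV. if k = 0 then 0 else f i (k - 1))
    = (\<Sum>\<^sub>\<infinity>(i,k)\<in>I \<times> UNIV. f i k)"
  by (rule infsumI, rule has_sum_Times_shift, rule has_sum_infsum)
     (simp add: nonneg_summable_on_complete)

lemma convex_hull_sum_with_remainder:
  fixes p :: "'i \<Rightarrow> 'a::real_vector"
  assumes "finite F" "\<And>x. x \<in> F \<Longrightarrow> 0 \<le> g x" "sum g F \<le> 1"
    and "\<And>x. x \<in> F \<Longrightarrow> p x \<in> convex hull S" "q \<in> convex hull S"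
  shows "(\<Sum>x\<in>F. g x *\<^sub>R p x) + (1 - sum g F) *\<^sub>R q \<in> convex hull S"
proof (cases "sum g F = 0")
  case True
  then have "\<forall>x\<in>F. g x = 0" using assms(1,2) by (subst (asm) sum_nonneg_eq_0_iff) auto
  then show ?thesis using True assms(5) by simp
next
  case False
  let ?s = "sum g F"
  have s: "0 < ?s" using False assms(2) sum_nonneg[of F g] by fastforce
  have "(\<Sum>x\<in>F. (g x / ?s) *\<^sub>R p x) \<in> convex hull S"
    using s assms by (intro convex_sum convex_convex_hull) (auto simp: sum_divide_distrib[symmetric])
  then have "?s *\<^sub>R (\<Sum>x\<in>F. (g x / ?s) *\<^sub>R p x) + (1 - ?s) *\<^sub>R q \<in> convex hull S"
    using s assms(3,5) by (intro convexD[OF convex_convex_hull]) auto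
  then show ?thesis using s by (simp add: scaleR_sum_right)
qed

lemma case_prod_scaleR_eq:
  "(\<lambda>p. (case p of (i,k) \<Rightarrow> g i k) *\<^sub>R (case p of (i,k) \<Rightarrow> y i k)) = (\<lambda>(i,k). g i k *\<^sub>R y i k)"
  by auto

lemma has_sum_in_closure_convex_hull:
  fixes p :: "'i \<Rightarrow> 'a::real_normed_vector"
  assumes nonneg: "\<And>x. x \<in> I \<Longrightarrow> 0 \<le> g x" and g1: "(g has_sum 1) I"
    and mean: "((\<lambda>x. g x *\<^sub>R p x) has_sum w) I" and in_S: "\<And>x. x \<in> I \<Longrightarrow> p x \<in> S"
  shows "w \<in> closure (convex hull S)"
proof -
  obtain i0 where i0: "i0 \<in> I"
    using g1 by (metis all_not_in_conv has_sum_empty has_sum_unique zero_neq_one)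
  let ?G = "\<lambda>F. (\<Sum>x\<in>F. g x *\<^sub>R p x) + (1 - sum g F) *\<^sub>R p i0"
  have "(?G \<longlongrightarrow> w + (1 - 1) *\<^sub>R p i0) (finite_subsets_at_top I)"
    using mean g1 unfolding has_sum_def by (intro tendsto_intros)
  moreover have "\<forall>\<^sub>F F in finite_subsets_at_top I. ?G F \<in> closure (convex hull S)"
  proof (rule eventually_finite_subsets_at_top_weakI)
    fix F assume F: "finite F" "F \<subseteq> I"
    have "sum g F \<le> 1"
      using F nonneg by (intro has_sum_mono_neutral[OF has_sum_finite[OF F(1)] g1]) auto
    then have "?G F \<in> convex hull S"
      using F nonneg in_S i0 by (intro convex_hull_sum_with_remainder) (auto intro: hull_inc)
    then show "?G F \<in> closure (convex hull S)" using closure_subset by blast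
  qed
  ultimately show ?thesis
    using Lim_in_closed_set[OF closed_closure _ finite_subsets_at_top_neq_bot] by fastforce
qed

lemma suminf_le_telescoping_ennreal:
  fixes J :: "nat \<Rightarrow> ennreal" and c :: "nat \<Rightarrow> real"
  assumes "\<And>t. J (Suc t) + ennreal (c t) \<le> J t"
  shows "(\<Sum>l. ennreal (c (l + t))) \<le> J t"
proof -
  have "(\<Sum>l<n. ennreal (c (l + t))) + J (t + n) \<le> J t" for n
  proof (induction n)
    case (Suc n)
    have "(\<Sum>l<Suc n. ennreal (c (l + t))) + J (t + Suc n)
        = (\<Sum>l<n. ennreal (c (l + t))) + (J (Suc (t + n)) + ennreal (c (t + n)))"
      by (simp add: ac_simps)
    also have "\<dots> \<le> (\<Sum>l<n. ennreal (c (l + t))) + J (t + n)" by (intro add_left_mono assms)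
    finally show ?case using Suc.IH by order
  qed simp
  then have "(\<Sum>l<n. ennreal (c (l + t))) + 0 \<le> J t" for n
    by (metis add_left_mono order_trans zero_le)
  then show ?thesis using ennreal_suminf_bound_add by fastforce
qed

section \<open>Predictions, constraint sets and costs-to-go\<close>

lemma pred_state_cong:
  "(\<And>k'. k' < k \<Longrightarrow> v k' = w k') \<Longrightarrow> pred_state A B x v k = pred_state A B x w k"
  by (induction k) auto

lemma pred_state_Suc_shift:
  "pred_state A B x v (Suc k) = pred_state A B (A *v x + B *v v 0) (\<lambda>k. v (Suc k)) k"
  by (induction k) auto

lemma pred_state_midpoint:
  "pred_state A B x (\<lambda>k. (1/2) *\<^sub>R (v k + w k)) k
   = (1/2) *\<^sub>R (pred_state A B x v k + pred_state A B x w k)"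
proof (induction k)
  case 0 then show ?case by (simp add: scaleR_2[symmetric] del: scaleR_2)
next
  case (Suc k) then show ?case by (simp add: algebra_simps)
qed

lemma pred_state_trajectory:
  assumes "\<And>t. xs (Suc t) = A *v xs t + B *v us t"
  shows "pred_state A B (xs t) (\<lambda>k. us (t + k)) k = xs (t + k)"
  by (induction k) (auto simp: assms)

lemma convex_polyhedron: "convex (polyhedron F b)"
  unfolding polyhedron_def convex_def
proof clarify
  fix x y :: "real^'a" and u v :: real and i
  assume h: "\<forall>i. (F *v x) $ i \<le> b $ i" "\<forall>i. (F *v y) $ i \<le> b $ i" "0 \<le> u" "0 \<le> v" "u + v = 1"
  have "(F *v (u *\<^sub>R x + v *\<^sub>R y)) $ i = u * (F *v x) $ i + v * (F *v y) $ i"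
    by (simp add: matrix_vector_right_distrib matrix_vector_mult_scaleR)
  also have "\<dots> \<le> u * b $ i + v * b $ i"
    using h by (intro add_mono mult_left_mono) auto
  also have "\<dots> = b $ i" using h(5) by (metis distrib_right mult_1)
  finally show "(F *v (u *\<^sub>R x + v *\<^sub>R y)) $ i \<le> b $ i" .
qed

lemma closed_polyhedron: "closed (polyhedron (F::real^'n^'m) b)"
proof -
  have "polyhedron F b = (\<Inter>i. {z. (F *v z) $ i \<le> b $ i})" unfolding polyhedron_def by auto
  moreover have "closed {z. (F *v z) $ i \<le> b $ i}" for i
    by (intro closed_Collect_le continuous_intros)
  ultimately show ?thesis by auto
qed

lemma convex_safe_set: "convex (safe_set xs m)"
  unfolding safe_set_def by (simp add: convex_closure)

lemma safe_set_stored_state: "i \<le> m \<Longrightarrow> xs i t \<in> safe_set xs m"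
  unfolding safe_set_def by (rule subsetD[OF closure_subset]) (auto intro: hull_inc)

lemma safe_set_subset:
  assumes "closed X" "convex X" "\<And>i t. i \<le> m \<Longrightarrow> xs i t \<in> X"
  shows "safe_set xs m \<subseteq> X"
  unfolding safe_set_def using assms by (intro closure_minimal hull_minimal) auto

lemma cost_to_go_Suc:
  "cost_to_go Q R xs us i k = ennreal (stage_cost Q R (xs i k) (us i k)) + cost_to_go Q R xs us i (Suc k)"
proof -
  let ?e = "\<lambda>l. ennreal (stage_cost Q R (xs i (l + k)) (us i (l + k)))"
  have "(\<lambda>l. ?e (Suc l)) sums (\<Sum>l. ?e (Suc l))" by (rule summable_sums[OF summableI])
  then have "(\<Sum>l. ?e l) = (\<Sum>l. ?e (Suc l)) + ?e 0" by (rule sums_unique[OF sums_Suc, symmetric])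
  then show ?thesis unfolding cost_to_go_def by (simp add: add.commute)
qed

lemma cost_to_go_split:
  "cost_to_go Q R xs us i t =
     (\<Sum>k<n. ennreal (stage_cost Q R (xs i (t + k)) (us i (t + k)))) + cost_to_go Q R xs us i (t + n)"
proof (induction n)
  case (Suc n)
  then show ?case using cost_to_go_Suc[of Q R xs us i "t + n"] by (simp add: add.assoc)
qed simp

lemma iter_cost_eq_cost_to_go: "iter_cost Q R xs us i = cost_to_go Q R xs us i 0"
  unfolding iter_cost_def cost_to_go_def by simp

lemma cost_to_go_le_iter_cost: "cost_to_go Q R xs us i t \<le> iter_cost Q R xs us i"
  unfolding iter_cost_eq_cost_to_go using cost_to_go_split[of Q R xs us i 0 t]
  by (simp add: le_iff_add add.commute)

lemma stage_cost_le_iter_cost: "ennreal (stage_cost Q R (xs i t) (us i t)) \<le> iter_cost Q R xs us i"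
  using cost_to_go_le_iter_cost[of Q R xs us i t] cost_to_go_Suc[of Q R xs us i t]
  by (metis le_iff_add order_trans)

lemma cost_to_go_eq_if_same_prefix:
  assumes "iter_cost Q R xs us i = iter_cost Q R xs us i'"
    and "\<And>s. s < t \<Longrightarrow> xs i s = xs i' s \<and> us i s = us i' s"
  shows "cost_to_go Q R xs us i t = cost_to_go Q R xs us i' t"
proof -
  let ?prefix = "\<lambda>i. \<Sum>k<t. ennreal (stage_cost Q R (xs i k) (us i k))"
  have split: "iter_cost Q R xs us i = ?prefix i + cost_to_go Q R xs us i t" for i
    unfolding iter_cost_eq_cost_to_go using cost_to_go_split[of Q R xs us i 0 t] by simp
  have "?prefix i = ?prefix i'" using assms(2) by (intro sum.cong) auto
  moreover have "?prefix i \<noteq> top" by (simp add: ennreal_sum_eq_top)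
  ultimately show ?thesis
    using assms(1) unfolding split by (metis ennreal_add_left_cancel infinity_ennreal_def)
qed

lemma inputs_bounded_if_iter_costs_finite:
  fixes R :: "real^'d^'d" and us :: "nat \<Rightarrow> nat \<Rightarrow> real^'d"
  assumes "psd Q" "pd R" and finite: "\<And>i. i \<le> m \<Longrightarrow> iter_cost Q R xs us i < top"
  obtains K where "\<And>i t. i \<le> m \<Longrightarrow> norm (us i t) \<le> K"
proof -
  obtain c where c: "0 < c" "\<And>u. c * (norm u)^2 \<le> u \<bullet> (R *v u)"
    using pd_quadratic_lower_bound[OF assms(2)] by blast
  define S where "S = (\<Sum>i\<le>m. enn2real (iter_cost Q R xs us i))"
  have "norm (us i t) \<le> 1 + S / c" if i: "i \<le> m" for i t
  proof -
    let ?x = "xs i t" and ?u = "us i t"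
    have "stage_cost Q R ?x ?u \<le> enn2real (iter_cost Q R xs us i)"
      using finite[OF i] stage_cost_le_iter_cost stage_cost_nonneg[OF assms(1,2)]
      by (metis enn2real_ennreal enn2real_mono)
    also have "\<dots> \<le> S" unfolding S_def using i by (intro member_le_sum) auto
    finally have "c * (norm ?u)^2 \<le> S"
      using c(2)[of ?u] psd_quadratic_nonneg[OF assms(1), of ?x] unfolding stage_cost_def by linarith
    then have "(norm ?u)^2 \<le> S / c" using c(1) by (simp add: pos_le_divide_eq mult.commute)
    moreover have "norm ?u \<le> 1 + (norm ?u)^2"
      using zero_le_power2[of "norm ?u - 1/2"] by (simp add: power2_eq_square algebra_simps)
    ultimately show ?thesis by simp
  qed
  then show thesis using that by blast
qed

section \<open>The V-function\<close>

definition convex_multipliers ::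
  "(nat \<Rightarrow> nat \<Rightarrow> real^'n) \<Rightarrow> nat \<Rightarrow> real^'n \<Rightarrow> (nat \<Rightarrow> nat \<Rightarrow> real) \<Rightarrow> bool" where
  "convex_multipliers xs m x \<gamma> \<longleftrightarrow> (\<forall>i k. 0 \<le> \<gamma> i k)
     \<and> ((\<lambda>(i,k). \<gamma> i k) has_sum 1) ({..m} \<times> UNIV)
     \<and> ((\<lambda>(i,k). \<gamma> i k *\<^sub>R xs i k) has_sum x) ({..m} \<times> UNIV)"

definition multiplier_cost ::
  "real^'n^'n \<Rightarrow> real^'d^'d \<Rightarrow> (nat \<Rightarrow> nat \<Rightarrow> real^'n) \<Rightarrow> (nat \<Rightarrow> nat \<Rightarrow> real^'d) \<Rightarrow> nat \<Rightarrow>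
   (nat \<Rightarrow> nat \<Rightarrow> real) \<Rightarrow> ennreal" where
  "multiplier_cost Q R xs us m \<gamma> =
     (\<Sum>\<^sub>\<infinity>(i,k)\<in>{..m} \<times> UNIV. ennreal (\<gamma> i k) * cost_to_go Q R xs us i k)"

lemma Vfun_eq_INF_multiplier_cost:
  "Vfun Q R xs us m x = (INF \<gamma> \<in> Collect (convex_multipliers xs m x). multiplier_cost Q R xs us m \<gamma>)"
  unfolding Vfun_def convex_multipliers_def multiplier_cost_def by simp

lemma Vfun_le_multiplier_cost:
  "convex_multipliers xs m x \<gamma> \<Longrightarrow> Vfun Q R xs us m x \<le> multiplier_cost Q R xs us m \<gamma>"
  unfolding Vfun_eq_INF_multiplier_cost by (rule INF_lower) simp

lemma Vfun_approx:
  assumes "Vfun Q R xs us m x < top" "0 < e"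
  obtains \<gamma> where "convex_multipliers xs m x \<gamma>"
    "multiplier_cost Q R xs us m \<gamma> < Vfun Q R xs us m x + ennreal e"
proof -
  have "Vfun Q R xs us m x < Vfun Q R xs us m x + ennreal e"
    using assms by (simp add: ennreal_add_left_cancel_less[of _ 0, simplified])
  then show thesis using that unfolding Vfun_eq_INF_multiplier_cost[of Q R xs us m x]
    by (auto simp: INF_less_iff)
qed

lemma convex_multipliers_in_safe_set:
  assumes "convex_multipliers xs m x \<gamma>"
  shows "x \<in> safe_set xs m"
  using assms unfolding convex_multipliers_def safe_set_def
  by (intro has_sum_in_closure_convex_hull[where I="{..m} \<times> UNIV" and g="\<lambda>(i,k). \<gamma> i k"
        and p="\<lambda>(i,k). xs i k"]) (auto simp: case_prod_scaleR_eq)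

lemma Vfun_stored_state_le_cost_to_go:
  assumes "p \<le> m"
  shows "Vfun Q R xs us m (xs p t) \<le> cost_to_go Q R xs us p t"
proof -
  define \<gamma> where "\<gamma> = (\<lambda>i k. if (i,k) = (p,t) then 1 else (0::real))"
  have pt: "(p,t) \<in> {..m} \<times> (UNIV::nat set)" using assms by simp
  have "((\<lambda>(i,k). \<gamma> i k) has_sum (\<lambda>(i,k). \<gamma> i k) (p,t)) ({..m} \<times> UNIV)"
    "((\<lambda>(i,k). \<gamma> i k *\<^sub>R xs i k) has_sum (\<lambda>(i,k). \<gamma> i k *\<^sub>R xs i k) (p,t)) ({..m} \<times> UNIV)"
    by (rule has_sum_single_support[OF pt]; auto simp: \<gamma>_def split: if_splits)+
  then have "convex_multipliers xs m (xs p t) \<gamma>"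
    unfolding convex_multipliers_def by (simp add: \<gamma>_def)
  then have "Vfun Q R xs us m (xs p t) \<le> multiplier_cost Q R xs us m \<gamma>"
    by (rule Vfun_le_multiplier_cost)
  also have "\<dots> = (\<lambda>(i,k). ennreal (\<gamma> i k) * cost_to_go Q R xs us i k) (p,t)"
    unfolding multiplier_cost_def
    by (rule infsumI, rule has_sum_single_support[OF pt]) (auto simp: \<gamma>_def split: if_splits)
  also have "\<dots> = cost_to_go Q R xs us p t" by (simp add: \<gamma>_def)
  finally show ?thesis .
qed

lemma convex_multipliers_midpoint:
  assumes "convex_multipliers xs m a \<gamma>1" "convex_multipliers xs m b \<gamma>2"
  shows "convex_multipliers xs m ((1/2) *\<^sub>R (a + b)) (\<lambda>i k. (\<gamma>1 i k + \<gamma>2 i k) / 2)"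
proof -
  let ?I = "{..m} \<times> (UNIV::nat set)"
  have "((\<lambda>(i,k). \<gamma>1 i k) has_sum 1) ?I" "((\<lambda>(i,k). \<gamma>2 i k) has_sum 1) ?I"
    using assms unfolding convex_multipliers_def by auto
  from has_sum_cmult_right[OF has_sum_add[OF this], of "1/2"]
  have "((\<lambda>p. (1/2) * ((\<lambda>(i,k). \<gamma>1 i k) p + (\<lambda>(i,k). \<gamma>2 i k) p)) has_sum 1) ?I"
    by simp
  moreover have "((\<lambda>p. (1/2) *\<^sub>R ((\<lambda>(i,k). \<gamma>1 i k *\<^sub>R xs i k) p + (\<lambda>(i,k). \<gamma>2 i k *\<^sub>R xs i k) p))
      has_sum ((1/2) *\<^sub>R (a + b))) ?I"
    using assms unfolding convex_multipliers_def by (intro has_sum_scaleR has_sum_add) auto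
  ultimately show ?thesis
    using assms unfolding convex_multipliers_def
    by (auto simp: split_beta add_divide_distrib scaleR_add_left scaleR_add_right cong: has_sum_cong)
qed

lemma multiplier_cost_midpoint:
  assumes "\<forall>i k. 0 \<le> \<gamma>1 i k" "\<forall>i k. 0 \<le> \<gamma>2 i k"
  shows "2 * multiplier_cost Q R xs us m (\<lambda>i k. (\<gamma>1 i k + \<gamma>2 i k) / 2)
       = multiplier_cost Q R xs us m \<gamma>1 + multiplier_cost Q R xs us m \<gamma>2"
proof -
  have "2 * (ennreal ((\<gamma>1 i k + \<gamma>2 i k) / 2) * c) = ennreal (\<gamma>1 i k) * c + ennreal (\<gamma>2 i k) * c" for i k c
  proof -
    have "2 * ennreal ((\<gamma>1 i k + \<gamma>2 i k) / 2) = ennreal (\<gamma>1 i k) + ennreal (\<gamma>2 i k)"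
      using assms by (simp add: ennreal_plus[symmetric] ennreal_numeral[symmetric] ennreal_mult[symmetric]
          del: ennreal_plus ennreal_numeral)
    then show ?thesis by (metis distrib_right mult.assoc)
  qed
  then show ?thesis
    unfolding multiplier_cost_def
    by (simp add: infsum_cmult_right_ennreal[symmetric] infsum_add_ennreal[symmetric] split_beta)
qed

lemma Vfun_midpoint_convex:
  "2 * Vfun Q R xs us m ((1/2) *\<^sub>R (a + b)) \<le> Vfun Q R xs us m a + Vfun Q R xs us m b"
proof (rule ennreal_le_epsilon)
  fix e :: real
  let ?V = "Vfun Q R xs us m" and ?C = "multiplier_cost Q R xs us m"
  assume finite: "?V a + ?V b < top" and e: "0 < e"
  obtain \<gamma>1 where \<gamma>1: "convex_multipliers xs m a \<gamma>1" "?C \<gamma>1 < ?V a + ennreal (e/2)"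
    using Vfun_approx[of Q R xs us m a "e/2"] finite e by (auto simp: top_unique)
  obtain \<gamma>2 where \<gamma>2: "convex_multipliers xs m b \<gamma>2" "?C \<gamma>2 < ?V b + ennreal (e/2)"
    using Vfun_approx[of Q R xs us m b "e/2"] finite e by (auto simp: top_unique)
  have "2 * ?V ((1/2) *\<^sub>R (a + b)) \<le> 2 * ?C (\<lambda>i k. (\<gamma>1 i k + \<gamma>2 i k) / 2)"
    by (intro mult_left_mono Vfun_le_multiplier_cost convex_multipliers_midpoint \<gamma>1 \<gamma>2) simp
  also have "\<dots> = ?C \<gamma>1 + ?C \<gamma>2"
    using \<gamma>1 \<gamma>2 unfolding convex_multipliers_def by (intro multiplier_cost_midpoint) auto
  also have "\<dots> \<le> (?V a + ennreal (e/2)) + (?V b + ennreal (e/2))"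
    using \<gamma>1 \<gamma>2 by (intro add_mono) auto
  also have "\<dots> = ?V a + ?V b + ennreal e"
    using e by (simp add: ennreal_plus[symmetric] del: ennreal_plus)
  finally show "2 * ?V ((1/2) *\<^sub>R (a + b)) \<le> ?V a + ?V b + ennreal e" .
qed

lemma multiplier_average_input:
  fixes us :: "nat \<Rightarrow> nat \<Rightarrow> 'a::euclidean_space"
  assumes \<gamma>: "convex_multipliers xs m z \<gamma>"
    and in_U: "\<And>i t. i \<le> m \<Longrightarrow> us i t \<in> U" and "closed U" "convex U"
    and bounded: "\<And>i t. i \<le> m \<Longrightarrow> norm (us i t) \<le> K"
  obtains u where "u \<in> U" "((\<lambda>(i,k). \<gamma> i k *\<^sub>R us i k) has_sum u) ({..m} \<times> UNIV)"
proof -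
  let ?I = "{..m} \<times> (UNIV::nat set)"
  have nonneg: "\<forall>i k. 0 \<le> \<gamma> i k" and g1: "((\<lambda>(i,k). \<gamma> i k) has_sum 1) ?I"
    using \<gamma> unfolding convex_multipliers_def by auto
  have "(\<lambda>(i,k). \<gamma> i k *\<^sub>R us i k) summable_on ?I"
  proof (rule abs_summable_summable, rule summable_on_comparison_test)
    show "(\<lambda>p. K * (\<lambda>(i,k). \<gamma> i k) p) summable_on ?I"
      using has_sum_cmult_right[OF g1, of K] by (auto simp: summable_on_def)
    show "norm ((\<lambda>(i,k). \<gamma> i k *\<^sub>R us i k) p) \<le> K * (\<lambda>(i,k). \<gamma> i k) p" if "p \<in> ?I" for p
      using that nonneg bounded by (auto simp: mult.commute[of K] intro!: mult_left_mono)
  qed simp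
  then obtain u where u: "((\<lambda>(i,k). \<gamma> i k *\<^sub>R us i k) has_sum u) ?I"
    by (auto simp: summable_on_def)
  have "u \<in> closure (convex hull U)"
    using u nonneg in_U g1
    by (intro has_sum_in_closure_convex_hull[where I="?I" and g="\<lambda>(i,k). \<gamma> i k" and p="\<lambda>(i,k). us i k"])
       (auto simp: case_prod_scaleR_eq)
  then show thesis using that u assms(3,4) by (metis closure_closed convex_hull_eq)
qed

lemma convex_multipliers_shift:
  assumes \<gamma>: "convex_multipliers xs m z \<gamma>"
    and dynamics: "\<And>i t. i \<le> m \<Longrightarrow> xs i (Suc t) = A *v xs i t + B *v us i t"
    and input: "((\<lambda>(i,k). \<gamma> i k *\<^sub>R us i k) has_sum u) ({..m} \<times> UNIV)"
  shows "convex_multipliers xs m (A *v z + B *v u) (\<lambda>i k. if k = 0 then 0 else \<gamma> i (k - 1))"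
proof -
  let ?I = "{..m} \<times> (UNIV::nat set)"
  have nonneg: "\<forall>i k. 0 \<le> \<gamma> i k" and g1: "((\<lambda>(i,k). \<gamma> i k) has_sum 1) ?I"
    and mean: "((\<lambda>(i,k). \<gamma> i k *\<^sub>R xs i k) has_sum z) ?I"
    using \<gamma> unfolding convex_multipliers_def by auto
  have "((\<lambda>p. A *v (\<lambda>(i,k). \<gamma> i k *\<^sub>R xs i k) p + B *v (\<lambda>(i,k). \<gamma> i k *\<^sub>R us i k) p)
      has_sum (A *v z + B *v u)) ?I"
    by (intro has_sum_add has_sum_bounded_linear[OF matrix_vector_mul_bounded_linear] mean input)
  then have "((\<lambda>(i,k). \<gamma> i k *\<^sub>R xs i (Suc k)) has_sum (A *v z + B *v u)) ?I"
    by (rule has_sum_cong[THEN iffD1, rotated])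
       (auto simp: dynamics matrix_vector_mult_scaleR scaleR_add_right)
  from has_sum_Times_shift[OF this] have
    "((\<lambda>(i,k). (if k = 0 then 0 else \<gamma> i (k - 1)) *\<^sub>R xs i k) has_sum (A *v z + B *v u)) ?I"
    by (rule has_sum_cong[THEN iffD1, rotated]) auto
  with has_sum_Times_shift[OF g1] nonneg show ?thesis
    unfolding convex_multipliers_def by auto
qed

lemma multiplier_cost_shift:
  assumes "psd Q" "pd R" "\<forall>i k. 0 \<le> \<gamma> i k"
  shows "multiplier_cost Q R xs us m \<gamma> =
    (\<Sum>\<^sub>\<infinity>(i,k)\<in>{..m} \<times> UNIV. ennreal (\<gamma> i k * stage_cost Q R (xs i k) (us i k)))
    + multiplier_cost Q R xs us m (\<lambda>i k. if k = 0 then 0 else \<gamma> i (k - 1))"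
proof -
  let ?I = "{..m} \<times> (UNIV::nat set)"
  have "multiplier_cost Q R xs us m \<gamma> = (\<Sum>\<^sub>\<infinity>p\<in>?I.
      (case p of (i,k) \<Rightarrow> ennreal (\<gamma> i k * stage_cost Q R (xs i k) (us i k)))
      + (case p of (i,k) \<Rightarrow> ennreal (\<gamma> i k) * cost_to_go Q R xs us i (Suc k)))"
    unfolding multiplier_cost_def
  proof (intro infsum_cong, clarify)
    fix i k
    show "ennreal (\<gamma> i k) * cost_to_go Q R xs us i k = ennreal (\<gamma> i k * stage_cost Q R (xs i k) (us i k))
        + ennreal (\<gamma> i k) * cost_to_go Q R xs us i (Suc k)"
      unfolding cost_to_go_Suc[of Q R xs us i k]
      using assms stage_cost_nonneg[OF assms(1,2)] by (simp add: distrib_left ennreal_mult)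
  qed
  also have "\<dots> = (\<Sum>\<^sub>\<infinity>(i,k)\<in>?I. ennreal (\<gamma> i k * stage_cost Q R (xs i k) (us i k)))
      + (\<Sum>\<^sub>\<infinity>(i,k)\<in>?I. ennreal (\<gamma> i k) * cost_to_go Q R xs us i (Suc k))"
    by (rule infsum_add_ennreal)
  also have "(\<Sum>\<^sub>\<infinity>(i,k)\<in>?I. ennreal (\<gamma> i k) * cost_to_go Q R xs us i (Suc k))
      = (\<Sum>\<^sub>\<infinity>(i,k)\<in>?I. if k = 0 then 0 else ennreal (\<gamma> i (k - 1)) * cost_to_go Q R xs us i (Suc (k - 1)))"
    by (rule infsum_Times_shift_ennreal[symmetric])
  also have "\<dots> = multiplier_cost Q R xs us m (\<lambda>i k. if k = 0 then 0 else \<gamma> i (k - 1))"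
    unfolding multiplier_cost_def by (rule infsum_cong) auto
  finally show ?thesis .
qed

lemma stage_cost_jensen:
  fixes y :: "'i \<Rightarrow> real^'n" and v :: "'i \<Rightarrow> real^'d"
  assumes Q: "psd Q" and R: "pd R"
    and nonneg: "\<And>p. p \<in> I \<Longrightarrow> 0 \<le> g p" and g1: "(g has_sum 1) I"
    and states: "((\<lambda>p. g p *\<^sub>R y p) has_sum z) I" and inputs: "((\<lambda>p. g p *\<^sub>R v p) has_sum u) I"
    and finite: "(\<Sum>\<^sub>\<infinity>p\<in>I. ennreal (g p * stage_cost Q R (y p) (v p))) \<noteq> top"
  shows "ennreal (stage_cost Q R z u) \<le> (\<Sum>\<^sub>\<infinity>p\<in>I. ennreal (g p * stage_cost Q R (y p) (v p)))"
proof -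
  let ?fQ = "\<lambda>p. g p * (y p \<bullet> (Q *v y p))" and ?fR = "\<lambda>p. g p * (v p \<bullet> (R *v v p))"
  have split: "g p * stage_cost Q R (y p) (v p) = ?fQ p + ?fR p" for p
    by (simp add: stage_cost_def distrib_left)
  have fQ: "0 \<le> ?fQ p" and fR: "0 \<le> ?fR p" if "p \<in> I" for p
    using nonneg[OF that] psd_quadratic_nonneg[OF Q] psd_quadratic_nonneg[OF pd_imp_psd[OF R]] by auto
  have summable: "(\<lambda>p. ?fQ p + ?fR p) summable_on I"
    and real: "(\<Sum>\<^sub>\<infinity>p\<in>I. ennreal (?fQ p + ?fR p)) = ennreal (\<Sum>\<^sub>\<infinity>p\<in>I. ?fQ p + ?fR p)"
    using ennreal_infsum_finite_real[of I "\<lambda>p. ?fQ p + ?fR p"] finite fQ fR by (simp_all add: split)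
  have sQ: "?fQ summable_on I" and sR: "?fR summable_on I"
    using fQ fR by (auto intro: summable_on_comparison_test[OF summable])
  have "stage_cost Q R z u \<le> (\<Sum>\<^sub>\<infinity>p\<in>I. ?fQ p) + (\<Sum>\<^sub>\<infinity>p\<in>I. ?fR p)"
    unfolding stage_cost_def
    by (intro add_mono psd_quadratic_jensen[OF Q _ g1 states sQ]
        psd_quadratic_jensen[OF pd_imp_psd[OF R] _ g1 inputs sR] nonneg)
  also have "\<dots> = (\<Sum>\<^sub>\<infinity>p\<in>I. ?fQ p + ?fR p)" by (rule infsum_add[symmetric, OF sQ sR])
  finally show ?thesis unfolding split real by (rule ennreal_leI)
qed

lemma Vfun_one_step:
  fixes us :: "nat \<Rightarrow> nat \<Rightarrow> real^'d"
  assumes Q: "psd Q" and R: "pd R"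
    and dynamics: "\<And>i t. i \<le> m \<Longrightarrow> xs i (Suc t) = A *v xs i t + B *v us i t"
    and in_U: "\<And>i t. i \<le> m \<Longrightarrow> us i t \<in> U" and "closed U" "convex U"
    and bounded: "\<And>i t. i \<le> m \<Longrightarrow> norm (us i t) \<le> K"
    and \<gamma>: "convex_multipliers xs m z \<gamma>" and finite: "multiplier_cost Q R xs us m \<gamma> < top"
  obtains u where "u \<in> U" "A *v z + B *v u \<in> safe_set xs m"
    "ennreal (stage_cost Q R z u) + Vfun Q R xs us m (A *v z + B *v u) \<le> multiplier_cost Q R xs us m \<gamma>"
proof -
  obtain u where u: "u \<in> U" and input: "((\<lambda>(i,k). \<gamma> i k *\<^sub>R us i k) has_sum u) ({..m} \<times> UNIV)"
    using multiplier_average_input[OF \<gamma>, where U=U and K=K] in_U assms(5,6) bounded by blast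
  let ?H = "\<Sum>\<^sub>\<infinity>(i,k)\<in>{..m} \<times> UNIV. ennreal (\<gamma> i k * stage_cost Q R (xs i k) (us i k))"
  let ?\<gamma>' = "\<lambda>i k. if k = 0 then 0 else \<gamma> i (k - 1)"
  have shift: "convex_multipliers xs m (A *v z + B *v u) ?\<gamma>'"
    by (rule convex_multipliers_shift[OF \<gamma> dynamics input])
  have split: "multiplier_cost Q R xs us m \<gamma> = ?H + multiplier_cost Q R xs us m ?\<gamma>'"
    using \<gamma> unfolding convex_multipliers_def by (intro multiplier_cost_shift Q R) auto
  have "?H \<noteq> top" using finite unfolding split ennreal_add_less_top by auto
  moreover have "?H = (\<Sum>\<^sub>\<infinity>p\<in>{..m} \<times> UNIV.
      ennreal ((\<lambda>(i,k). \<gamma> i k) p * stage_cost Q R ((\<lambda>(i,k). xs i k) p) ((\<lambda>(i,k). us i k) p)))"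
    by (rule infsum_cong) auto
  ultimately have "ennreal (stage_cost Q R z u) \<le> ?H"
    using stage_cost_jensen[OF Q R, where g="\<lambda>(i,k). \<gamma> i k" and y="\<lambda>(i,k). xs i k"
        and v="\<lambda>(i,k). us i k" and I="{..m} \<times> UNIV" and z=z and u=u]
      \<gamma> input unfolding convex_multipliers_def case_prod_scaleR_eq by auto
  moreover have "Vfun Q R xs us m (A *v z + B *v u) \<le> multiplier_cost Q R xs us m ?\<gamma>'"
    by (rule Vfun_le_multiplier_cost[OF shift])
  ultimately have "ennreal (stage_cost Q R z u) + Vfun Q R xs us m (A *v z + B *v u)
      \<le> multiplier_cost Q R xs us m \<gamma>"
    unfolding split by (rule add_mono)
  with u convex_multipliers_in_safe_set[OF shift] show thesis by (rule that)
qed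

section \<open>The LMPC problem\<close>

lemma lmpc_cost_eq_real_sum:
  assumes "psd Q" "pd R"
  shows "lmpc_cost A B Q R N xs us i x v =
     ennreal (\<Sum>k<N. stage_cost Q R (pred_state A B x v k) (v k)) + Vfun Q R xs us (i - 1) (pred_state A B x v N)"
  unfolding lmpc_cost_def using stage_cost_nonneg[OF assms] by (subst sum_ennreal) auto

lemma lmpc_feasible_midpoint:
  assumes "convex X" "convex U" "lmpc_feasible A B X U N xs i x v" "lmpc_feasible A B X U N xs i x w"
  shows "lmpc_feasible A B X U N xs i x (\<lambda>k. (1/2) *\<^sub>R (v k + w k))"
proof -
  have half: "(1/2) *\<^sub>R (a + b) \<in> S" if "convex S" "a \<in> S" "b \<in> S" for S and a b :: "'z::real_vector"
    using convexD[OF that, of "1/2" "1/2"] by (simp add: scaleR_add_right)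
  show ?thesis
    using assms convex_safe_set unfolding lmpc_feasible_def pred_state_midpoint by (auto intro!: half)
qed

lemma stage_cost_sum_midpoint:
  fixes v w :: "nat \<Rightarrow> real^'d"
  assumes Q: "psd Q" and R: "pd R" and N: "N \<ge> 1"
  defines "mid \<equiv> \<lambda>k. (1/2) *\<^sub>R (v k + w k)"
  shows "2 * (\<Sum>k<N. stage_cost Q R (pred_state A B x mid k) (mid k))
      + (v 0 - w 0) \<bullet> (R *v (v 0 - w 0)) / 2
    \<le> (\<Sum>k<N. stage_cost Q R (pred_state A B x v k) (v k))
      + (\<Sum>k<N. stage_cost Q R (pred_state A B x w k) (w k))"
proof -
  let ?pv = "pred_state A B x v" and ?pw = "pred_state A B x w"
  define hv where "hv k = stage_cost Q R (?pv k) (v k)" for k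
  define hw where "hw k = stage_cost Q R (?pw k) (w k)" for k
  define hm where "hm k = stage_cost Q R (pred_state A B x mid k) (mid k)" for k
  have hm: "hm k = (hv k + hw k) / 2
      - ((?pv k - ?pw k) \<bullet> (Q *v (?pv k - ?pw k)) + (v k - w k) \<bullet> (R *v (v k - w k))) / 4" for k
    unfolding hm_def hv_def hw_def mid_def pred_state_midpoint by (rule stage_cost_midpoint[OF Q R])
  have "2 * hm k \<le> hv k + hw k" for k
    using hm[of k] psd_quadratic_nonneg[OF Q, of "?pv k - ?pw k"]
      psd_quadratic_nonneg[OF pd_imp_psd[OF R], of "v k - w k"] by argo
  moreover have "2 * hm 0 + (v 0 - w 0) \<bullet> (R *v (v 0 - w 0)) / 2 \<le> hv 0 + hw 0"
    using hm[of 0] psd_quadratic_nonneg[OF Q, of "?pv 0 - ?pw 0"] by simp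
  moreover obtain n where n: "N = Suc n" using N by (cases N) auto
  ultimately show ?thesis
    using sum_mono[of "{..<n}" "\<lambda>k. 2 * hm (Suc k)" "\<lambda>k. hv (Suc k) + hw (Suc k)"]
    unfolding hv_def[symmetric] hw_def[symmetric] hm_def[symmetric] n sum.lessThan_Suc_shift
    by (simp add: sum_distrib_left sum.distrib)
qed

lemma lmpc_cost_midpoint:
  assumes Q: "psd Q" and R: "pd R" and N: "N \<ge> 1"
  shows "2 * lmpc_cost A B Q R N xs us i x (\<lambda>k. (1/2) *\<^sub>R (v k + w k))
      + ennreal ((v 0 - w 0) \<bullet> (R *v (v 0 - w 0)) / 2)
    \<le> lmpc_cost A B Q R N xs us i x v + lmpc_cost A B Q R N xs us i x w"
proof -
  let ?mid = "\<lambda>k. (1/2) *\<^sub>R (v k + w k)" and ?V = "Vfun Q R xs us (i - 1)"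
  let ?\<delta> = "(v 0 - w 0) \<bullet> (R *v (v 0 - w 0)) / 2"
  let ?S = "\<lambda>v. \<Sum>k<N. stage_cost Q R (pred_state A B x v k) (v k)"
  have nonneg: "0 \<le> ?S v" "0 \<le> ?\<delta>" for v
    using stage_cost_nonneg[OF Q R] psd_quadratic_nonneg[OF pd_imp_psd[OF R]] by (auto intro: sum_nonneg)
  have "2 * lmpc_cost A B Q R N xs us i x ?mid + ennreal ?\<delta>
      = ennreal (2 * ?S ?mid + ?\<delta>) + 2 * ?V (pred_state A B x ?mid N)"
    unfolding lmpc_cost_eq_real_sum[OF Q R] using nonneg
    by (simp add: distrib_left ennreal_plus ennreal_mult ac_simps)
  also have "\<dots> \<le> ennreal (?S v + ?S w) + (?V (pred_state A B x v N) + ?V (pred_state A B x w N))"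
    using Vfun_midpoint_convex[of Q R xs us "i - 1" "pred_state A B x v N" "pred_state A B x w N"]
    by (intro add_mono ennreal_leI stage_cost_sum_midpoint[OF Q R N]) (simp add: pred_state_midpoint)
  also have "\<dots> = lmpc_cost A B Q R N xs us i x v + lmpc_cost A B Q R N xs us i x w"
    unfolding lmpc_cost_eq_real_sum[OF Q R] using nonneg by (simp add: ennreal_plus ac_simps)
  finally show ?thesis .
qed

lemma lmpc_optimal_first_input_unique:
  assumes Q: "psd Q" and R: "pd R" and "convex X" "convex U" and N: "N \<ge> 1"
    and opt: "lmpc_optimal A B X U Q R N xs us i x v"
    and w: "lmpc_feasible A B X U N xs i x w"
    and w_le: "lmpc_cost A B Q R N xs us i x w \<le> lmpc_cost A B Q R N xs us i x v"
    and finite: "lmpc_cost A B Q R N xs us i x v < top"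
  shows "v 0 = w 0"
proof -
  let ?J = "lmpc_cost A B Q R N xs us i x" and ?mid = "\<lambda>k. (1/2) *\<^sub>R (v k + w k)"
  let ?\<delta> = "(v 0 - w 0) \<bullet> (R *v (v 0 - w 0)) / 2"
  have "?J v \<le> ?J ?mid"
    using opt lmpc_feasible_midpoint[OF assms(3,4) _ w] unfolding lmpc_optimal_def by blast
  then have "2 * ?J v + ennreal ?\<delta> \<le> 2 * ?J ?mid + ennreal ?\<delta>"
    by (intro add_right_mono mult_left_mono) auto
  also have "\<dots> \<le> ?J v + ?J w" by (rule lmpc_cost_midpoint[OF Q R N])
  also have "\<dots> \<le> 2 * ?J v + 0" using w_le by (simp add: mult_2 add_left_mono)
  finally have "2 * ?J v + ennreal ?\<delta> \<le> 2 * ?J v + 0" .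
  moreover have "2 * ?J v \<noteq> top" using finite by (simp add: mult_2)
  ultimately have "ennreal ?\<delta> \<le> 0"
    unfolding ennreal_add_left_cancel_le infinity_ennreal_def by blast
  then have "(v 0 - w 0) \<bullet> (R *v (v 0 - w 0)) \<le> 0" by (simp add: ennreal_eq_0_iff)
  then show ?thesis using R unfolding pd_def by (metis eq_iff_diff_eq_0 not_le)
qed

lemma stored_tail_candidate:
  assumes "p < i"
    and dynamics: "\<And>s. xs p (Suc s) = A *v xs p s + B *v us p s"
    and "\<And>s. xs p s \<in> X" "\<And>s. us p s \<in> U"
  shows "lmpc_feasible A B X U N xs i (xs p t) (\<lambda>k. us p (t + k))"
    and "lmpc_cost A B Q R N xs us i (xs p t) (\<lambda>k. us p (t + k)) \<le> cost_to_go Q R xs us p t"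
proof -
  have pred: "pred_state A B (xs p t) (\<lambda>k. us p (t + k)) k = xs p (t + k)" for k
    by (rule pred_state_trajectory[where xs="xs p" and us="us p", OF dynamics])
  have p: "p \<le> i - 1" using assms(1) by simp
  show "lmpc_feasible A B X U N xs i (xs p t) (\<lambda>k. us p (t + k))"
    unfolding lmpc_feasible_def pred using assms(3,4) safe_set_stored_state[OF p] by auto
  have "lmpc_cost A B Q R N xs us i (xs p t) (\<lambda>k. us p (t + k))
      \<le> (\<Sum>k<N. ennreal (stage_cost Q R (xs p (t + k)) (us p (t + k)))) + cost_to_go Q R xs us p (t + N)"
    unfolding lmpc_cost_def pred by (intro add_left_mono Vfun_stored_state_le_cost_to_go p)
  also have "\<dots> = cost_to_go Q R xs us p t" by (rule cost_to_go_split[symmetric])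
  finally show "lmpc_cost A B Q R N xs us i (xs p t) (\<lambda>k. us p (t + k)) \<le> cost_to_go Q R xs us p t" .
qed

lemma pred_state_shifted_plan:
  assumes "k \<le> n"
  shows "pred_state A B (A *v x + B *v v 0) (\<lambda>k. if k < n then v (Suc k) else u) k
    = pred_state A B x v (Suc k)"
  unfolding pred_state_Suc_shift using assms by (intro pred_state_cong) auto

lemma lmpc_feasible_shifted_plan:
  assumes v: "lmpc_feasible A B X U (Suc n) xs i x v"
    and u: "u \<in> U" "A *v pred_state A B x v (Suc n) + B *v u \<in> safe_set xs (i - 1)"
    and safe_X: "safe_set xs (i - 1) \<subseteq> X"
  shows "lmpc_feasible A B X U (Suc n) xs i (A *v x + B *v v 0) (\<lambda>k. if k < n then v (Suc k) else u)"
  unfolding lmpc_feasible_def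
proof (intro conjI allI impI)
  let ?x' = "A *v x + B *v v 0" and ?w = "\<lambda>k. if k < n then v (Suc k) else u"
  note shifted = pred_state_shifted_plan[where A=A and B=B and x=x and v=v and u=u and n=n]
  have v_XU: "pred_state A B x v k \<in> X" "v k \<in> U" if "k < Suc n" for k
    using v that unfolding lmpc_feasible_def by auto
  fix k assume k: "k < Suc n"
  show "pred_state A B ?x' ?w k \<in> X"
  proof (cases "k < n")
    case True
    then show ?thesis using shifted[of k] v_XU(1)[of "Suc k"] by (simp del: pred_state.simps)
  next
    case False
    with k have "k = n" by simp
    then show ?thesis
      using shifted[of n] v safe_X unfolding lmpc_feasible_def by (auto simp del: pred_state.simps)
  qed
  show "?w k \<in> U" using k u(1) v_XU(2)[of "Suc k"] by auto
next
  show "pred_state A B (A *v x + B *v v 0) (\<lambda>k. if k < n then v (Suc k) else u) (Suc n)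
      \<in> safe_set xs (i - 1)"
    using pred_state_shifted_plan[where A=A and B=B and x=x and v=v and u=u and k=n and n=n] u(2)
    by simp
qed

lemma lmpc_cost_shifted_plan:
  fixes A :: "real^'n^'n" and B :: "real^'d^'n" and x :: "real^'n" and v :: "nat \<Rightarrow> real^'d"
    and n :: nat
  defines "z \<equiv> pred_state A B x v (Suc n)"
  shows "lmpc_cost A B Q R (Suc n) xs us i (A *v x + B *v v 0) (\<lambda>k. if k < n then v (Suc k) else u)
      + ennreal (stage_cost Q R x (v 0)) + Vfun Q R xs us (i - 1) z
    = lmpc_cost A B Q R (Suc n) xs us i x v + ennreal (stage_cost Q R z u)
      + Vfun Q R xs us (i - 1) (A *v z + B *v u)"
proof -
  let ?x' = "A *v x + B *v v 0" and ?w = "\<lambda>k. if k < n then v (Suc k) else u"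
  let ?S = "\<Sum>k<n. ennreal (stage_cost Q R (pred_state A B x v (Suc k)) (v (Suc k)))"
  note shifted = pred_state_shifted_plan[where A=A and B=B and x=x and v=v and u=u and n=n]
  have "(\<Sum>k<n. ennreal (stage_cost Q R (pred_state A B ?x' ?w k) (?w k))) = ?S"
    using shifted by (intro sum.cong) (auto simp del: pred_state.simps(2))
  moreover have "pred_state A B ?x' ?w (Suc n) = A *v z + B *v u"
    using shifted[of n] unfolding z_def by simp
  ultimately have "lmpc_cost A B Q R (Suc n) xs us i ?x' ?w
      = ?S + ennreal (stage_cost Q R z u) + Vfun Q R xs us (i - 1) (A *v z + B *v u)"
    unfolding lmpc_cost_def sum.lessThan_Suc using shifted[of n] unfolding z_def
    by (simp del: pred_state.simps(2))
  moreover have "lmpc_cost A B Q R (Suc n) xs us i x v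
      = ennreal (stage_cost Q R x (v 0)) + ?S + Vfun Q R xs us (i - 1) z"
    unfolding lmpc_cost_def sum.lessThan_Suc_shift z_def by (simp del: pred_state.simps(2))
  ultimately show ?thesis by (simp add: ac_simps)
qed

context
  fixes A :: "real^'n^'n" and B :: "real^'d^'n" and X :: "(real^'n) set" and U :: "(real^'d) set"
    and Q :: "real^'n^'n" and R :: "real^'d^'d" and N i :: nat and K :: real
    and xs :: "nat \<Rightarrow> nat \<Rightarrow> real^'n" and us :: "nat \<Rightarrow> nat \<Rightarrow> real^'d"
  assumes Q: "psd Q" and R: "pd R" and X: "closed X" "convex X" and U: "closed U" "convex U"
    and N: "N \<ge> 1"
    and dynamics: "\<And>p t. p \<le> i - 1 \<Longrightarrow> xs p (Suc t) = A *v xs p t + B *v us p t"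
    and in_X: "\<And>p t. p \<le> i - 1 \<Longrightarrow> xs p t \<in> X" and in_U: "\<And>p t. p \<le> i - 1 \<Longrightarrow> us p t \<in> U"
    and bounded: "\<And>p t. p \<le> i - 1 \<Longrightarrow> norm (us p t) \<le> K"
begin

lemma lmpc_cost_decrease_approx:
  assumes v: "lmpc_optimal A B X U Q R N xs us i x v"
    and w: "lmpc_optimal A B X U Q R N xs us i (A *v x + B *v v 0) w"
    and V: "Vfun Q R xs us (i - 1) (pred_state A B x v N) < top" and e: "0 < e"
  shows "lmpc_cost A B Q R N xs us i (A *v x + B *v v 0) w + ennreal (stage_cost Q R x (v 0))
           \<le> lmpc_cost A B Q R N xs us i x v + ennreal e"
proof -
  let ?J = "lmpc_cost A B Q R N xs us i" and ?V = "Vfun Q R xs us (i - 1)"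
  let ?x' = "A *v x + B *v v 0" and ?z = "pred_state A B x v N" and ?h = "ennreal (stage_cost Q R x (v 0))"
  obtain n where n: "N = Suc n" using N by (cases N) auto
  obtain \<gamma> where \<gamma>: "convex_multipliers xs (i - 1) ?z \<gamma>"
    "multiplier_cost Q R xs us (i - 1) \<gamma> < ?V ?z + ennreal e"
    using Vfun_approx[OF V e] by blast
  have "?V ?z + ennreal e < top" using V by simp
  with \<gamma>(2) have finite: "multiplier_cost Q R xs us (i - 1) \<gamma> < top" by (rule order.strict_trans)
  obtain u where u: "u \<in> U" "A *v ?z + B *v u \<in> safe_set xs (i - 1)"
    "ennreal (stage_cost Q R ?z u) + ?V (A *v ?z + B *v u) \<le> multiplier_cost Q R xs us (i - 1) \<gamma>"
    by (rule Vfun_one_step[where m="i - 1" and xs=xs and us=us and A=A and B=B and U=U and K=K])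
       (use Q R dynamics in_U U bounded \<gamma>(1) finite in auto)
  let ?w = "\<lambda>k. if k < n then v (Suc k) else u"
  have "safe_set xs (i - 1) \<subseteq> X" by (rule safe_set_subset[OF X in_X])
  moreover have "lmpc_feasible A B X U N xs i x v" using v unfolding lmpc_optimal_def by blast
  ultimately have "lmpc_feasible A B X U N xs i ?x' ?w"
    using lmpc_feasible_shifted_plan[of A B X U n xs i x v u] u(1,2) unfolding n by blast
  then have "?J ?x' w \<le> ?J ?x' ?w" using w unfolding lmpc_optimal_def by blast
  then have "?J ?x' w + ?h + ?V ?z \<le> ?J ?x' ?w + ?h + ?V ?z" by (intro add_right_mono)
  also have "\<dots> = ?J x v + (ennreal (stage_cost Q R ?z u) + ?V (A *v ?z + B *v u))"
    using lmpc_cost_shifted_plan[of A B Q R n xs us i x v u] unfolding n[symmetric]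
    by (simp only: add.assoc)
  also have "\<dots> \<le> ?J x v + (?V ?z + ennreal e)"
    using order_trans[OF u(3) less_imp_le[OF \<gamma>(2)]] by (rule add_left_mono)
  finally have "?V ?z + (?J ?x' w + ?h) \<le> ?V ?z + (?J x v + ennreal e)"
    by (simp only: add.commute add.left_commute add.assoc)
  then show ?thesis using V unfolding ennreal_add_left_cancel_le infinity_ennreal_def by auto
qed

lemma lmpc_cost_decrease:
  assumes v: "lmpc_optimal A B X U Q R N xs us i x v"
    and w: "lmpc_optimal A B X U Q R N xs us i (A *v x + B *v v 0) w"
  shows "lmpc_cost A B Q R N xs us i (A *v x + B *v v 0) w + ennreal (stage_cost Q R x (v 0))
           \<le> lmpc_cost A B Q R N xs us i x v"
proof (cases "Vfun Q R xs us (i - 1) (pred_state A B x v N) < top")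
  case True
  show ?thesis by (rule ennreal_le_epsilon) (rule lmpc_cost_decrease_approx[OF v w True])
next
  case False
  then have "Vfun Q R xs us (i - 1) (pred_state A B x v N) = top" using top.not_eq_extremum by blast
  then show ?thesis unfolding lmpc_cost_def by simp
qed

end

section \<open>The closed loop\<close>

locale lmpc_closed_loop =
  fixes A :: "real^'n^'n" and B :: "real^'d^'n" and X :: "(real^'n) set" and U :: "(real^'d) set"
    and Q :: "real^'n^'n" and R :: "real^'d^'d" and N :: nat and xS :: "real^'n"
    and xs :: "nat \<Rightarrow> nat \<Rightarrow> real^'n" and us :: "nat \<Rightarrow> nat \<Rightarrow> real^'d"
  assumes Q_psd: "psd Q" and R_pd: "pd R"
    and closed_X: "closed X" and convex_X: "convex X" and closed_U: "closed U" and convex_U: "convex U"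
    and horizon_pos: "N \<ge> 1"
    and initial_state: "\<And>i. xs i 0 = xS"
    and dynamics: "\<And>i t. xs i (Suc t) = A *v xs i t + B *v us i t"
    and first_states_in_X: "\<And>t. xs 0 t \<in> X" and first_inputs_in_U: "\<And>t. us 0 t \<in> U"
    and first_iter_cost_finite: "iter_cost Q R xs us 0 < top"
    and lmpc_policy: "\<And>i t. i \<ge> 1 \<Longrightarrow>
      \<exists>v. lmpc_optimal A B X U Q R N xs us i (xs i t) v \<and> us i t = v 0"
begin

definition lmpc_plan :: "nat \<Rightarrow> nat \<Rightarrow> nat \<Rightarrow> real^'d" where
  "lmpc_plan i t = (SOME v. lmpc_optimal A B X U Q R N xs us i (xs i t) v \<and> us i t = v 0)"

definition lmpc_value :: "nat \<Rightarrow> nat \<Rightarrow> ennreal" where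
  "lmpc_value i t = lmpc_cost A B Q R N xs us i (xs i t) (lmpc_plan i t)"

lemma lmpc_plan_spec:
  assumes "i \<ge> 1"
  shows "lmpc_optimal A B X U Q R N xs us i (xs i t) (lmpc_plan i t)" "us i t = lmpc_plan i t 0"
  using someI_ex[OF lmpc_policy[OF assms, of t]] unfolding lmpc_plan_def by auto

lemma states_in_X: "xs i t \<in> X"
proof (cases "i = 0")
  case False
  then have "lmpc_feasible A B X U N xs i (xs i t) (lmpc_plan i t)"
    using lmpc_plan_spec(1)[of i t] unfolding lmpc_optimal_def by simp
  then show ?thesis using horizon_pos unfolding lmpc_feasible_def by force
qed (simp add: first_states_in_X)

lemma inputs_in_U: "us i t \<in> U"
proof (cases "i = 0")
  case False
  then have "lmpc_feasible A B X U N xs i (xs i t) (lmpc_plan i t)"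
    using lmpc_plan_spec(1)[of i t] unfolding lmpc_optimal_def by simp
  then show ?thesis using horizon_pos lmpc_plan_spec(2)[of i t] False unfolding lmpc_feasible_def by force
qed (simp add: first_inputs_in_U)

lemma states_eq_if_inputs_eq: "(\<And>s. s < t \<Longrightarrow> us i s = us i' s) \<Longrightarrow> xs i t = xs i' t"
  by (induction t) (simp_all add: initial_state dynamics)

lemma earlier_tail_candidate:
  assumes "p < i"
  shows "lmpc_feasible A B X U N xs i (xs p t) (\<lambda>k. us p (t + k))"
    and "lmpc_cost A B Q R N xs us i (xs p t) (\<lambda>k. us p (t + k)) \<le> cost_to_go Q R xs us p t"
  using stored_tail_candidate[where xs=xs and us=us and A=A and B=B and X=X and U=U,
      OF assms dynamics states_in_X inputs_in_U] by blast+

lemma lmpc_value_le_stored_cost_to_go: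
  assumes "i \<ge> 1" "p < i" "xs p t = xs i t"
  shows "lmpc_value i t \<le> cost_to_go Q R xs us p t"
proof -
  have "lmpc_feasible A B X U N xs i (xs i t) (\<lambda>k. us p (t + k))"
    using earlier_tail_candidate(1)[OF assms(2), of t] assms(3) by simp
  then have "lmpc_value i t \<le> lmpc_cost A B Q R N xs us i (xs p t) (\<lambda>k. us p (t + k))"
    using lmpc_plan_spec(1)[OF assms(1), of t] assms(3) unfolding lmpc_value_def lmpc_optimal_def by simp
  then show ?thesis using earlier_tail_candidate(2)[OF assms(2)] by (rule order_trans)
qed

lemma lmpc_value_Suc_le:
  assumes i: "i \<ge> 1" and finite: "\<And>p. p < i \<Longrightarrow> iter_cost Q R xs us p < top"
  shows "lmpc_value i (Suc t) + ennreal (stage_cost Q R (xs i t) (us i t)) \<le> lmpc_value i t"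
proof -
  have earlier: "p \<le> i - 1 \<longleftrightarrow> p < i" for p using i by linarith
  obtain K where K: "\<And>p t. p \<le> i - 1 \<Longrightarrow> norm (us p t) \<le> K"
    using inputs_bounded_if_iter_costs_finite[OF Q_psd R_pd, where m="i - 1"] finite
    unfolding earlier by blast
  have next_state: "xs i (Suc t) = A *v xs i t + B *v lmpc_plan i t 0"
    using dynamics lmpc_plan_spec(2)[OF i] by simp
  have "lmpc_optimal A B X U Q R N xs us i (A *v xs i t + B *v lmpc_plan i t 0) (lmpc_plan i (Suc t))"
    using lmpc_plan_spec(1)[OF i, of "Suc t"] unfolding next_state .
  with lmpc_plan_spec(1)[OF i, of t] show ?thesis
    unfolding lmpc_value_def next_state lmpc_plan_spec(2)[OF i, of t]
    by (intro lmpc_cost_decrease[where xs=xs and us=us and K=K])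
       (use Q_psd R_pd closed_X convex_X closed_U convex_U horizon_pos dynamics states_in_X inputs_in_U K
         in auto)
qed

lemma cost_to_go_le_lmpc_value:
  assumes "i \<ge> 1" "\<And>p. p < i \<Longrightarrow> iter_cost Q R xs us p < top"
  shows "cost_to_go Q R xs us i t \<le> lmpc_value i t"
  unfolding cost_to_go_def by (rule suminf_le_telescoping_ennreal, rule lmpc_value_Suc_le[OF assms])

lemma iter_cost_finite: "iter_cost Q R xs us i < top"
proof (induction i rule: less_induct)
  case (less i)
  show ?case
  proof (cases "i = 0")
    case False
    then have i: "i \<ge> 1" by simp
    have "iter_cost Q R xs us i = cost_to_go Q R xs us i 0" by (rule iter_cost_eq_cost_to_go)
    also have "\<dots> \<le> lmpc_value i 0" by (rule cost_to_go_le_lmpc_value[OF i less.IH])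
    also have "\<dots> \<le> cost_to_go Q R xs us (i - 1) 0"
      using i by (intro lmpc_value_le_stored_cost_to_go) (auto simp: initial_state)
    also have "\<dots> = iter_cost Q R xs us (i - 1)" by (rule iter_cost_eq_cost_to_go[symmetric])
    also have "\<dots> < top" using less.IH i by simp
    finally show ?thesis .
  qed (simp add: first_iter_cost_finite)
qed

lemma input_eq_stored_if_cost_to_go_eq:
  assumes i: "i \<ge> 1" and p: "p < i" and state: "xs p t = xs i t"
    and same_cost: "cost_to_go Q R xs us p t = cost_to_go Q R xs us i t"
  shows "us i t = us p t"
proof -
  let ?J = "lmpc_cost A B Q R N xs us i (xs i t)" and ?tail = "\<lambda>k. us p (t + k)"
  have "?J ?tail \<le> cost_to_go Q R xs us i t"
    using earlier_tail_candidate(2)[OF p, of t] state same_cost by simp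
  also have "\<dots> \<le> ?J (lmpc_plan i t)"
    using cost_to_go_le_lmpc_value[OF i iter_cost_finite] unfolding lmpc_value_def .
  finally have tail_le: "?J ?tail \<le> ?J (lmpc_plan i t)" .
  have "?J (lmpc_plan i t) \<le> cost_to_go Q R xs us p t"
    using lmpc_value_le_stored_cost_to_go[OF i p state] unfolding lmpc_value_def .
  also have "\<dots> < top" using cost_to_go_le_iter_cost iter_cost_finite by (rule le_less_trans)
  finally have "lmpc_plan i t 0 = ?tail 0"
    using lmpc_optimal_first_input_unique[OF Q_psd R_pd convex_X convex_U horizon_pos lmpc_plan_spec(1)[OF i]]
      earlier_tail_candidate(1)[OF p, of t] state tail_le by simp
  then show ?thesis using lmpc_plan_spec(2)[OF i] by simp
qed

theorem same_iter_cost_same_trajectory: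
  assumes j: "j \<ge> 1" and same_cost: "iter_cost Q R xs us (j - 1) = iter_cost Q R xs us j"
  shows "xs (j - 1) = xs j"
proof -
  have "\<forall>s<t. us j s = us (j - 1) s" for t
  proof (induction t)
    case (Suc t)
    then have prefix: "s \<le> t \<Longrightarrow> xs (j - 1) s = xs j s" for s
      by (intro states_eq_if_inputs_eq[symmetric]) auto
    have "cost_to_go Q R xs us (j - 1) t = cost_to_go Q R xs us j t"
      using Suc.IH prefix by (intro cost_to_go_eq_if_same_prefix[OF same_cost]) auto
    then have "us j t = us (j - 1) t"
      using j prefix[of t] by (intro input_eq_stored_if_cost_to_go_eq) auto
    with Suc.IH show ?case using less_Suc_eq by auto
  qed simp
  then show ?thesis by (intro ext states_eq_if_inputs_eq) auto
qed

end

theorem lemma1: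
  fixes A :: "real^'n^'n" and B :: "real^'d^'n"
    and Fx :: "real^'n^'p" and bx :: "real^'p"
    and Fu :: "real^'d^'q" and bu :: "real^'q"
    and Q :: "real^'n^'n" and R :: "real^'d^'d"
    and N :: nat and xS :: "real^'n"
    and xs :: "nat \<Rightarrow> nat \<Rightarrow> real^'n" and us :: "nat \<Rightarrow> nat \<Rightarrow> real^'d"
    and j :: nat
  assumes X0: "0 \<in> interior (polyhedron Fx bx)"
    and U0: "0 \<in> interior (polyhedron Fu bu)"
    and Qpsd: "psd Q" and Rpd: "pd R"
    and init: "\<And>i. xs i 0 = xS"
    and traj0_dyn: "\<And>t. xs 0 (Suc t) = A *v xs 0 t + B *v us 0 t"
    and traj0_X: "\<And>t. xs 0 t \<in> polyhedron Fx bx"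
    and traj0_U: "\<And>t. us 0 t \<in> polyhedron Fu bu"
    and traj0_xlim: "xs 0 \<longlonglongrightarrow> 0"
    and traj0_ulim: "us 0 \<longlonglongrightarrow> 0"
    and traj0_cost: "summable (\<lambda>t. stage_cost Q R (xs 0 t) (us 0 t))"
    and closed_loop_dyn: "\<And>i t. i \<ge> 1 \<Longrightarrow> xs i (Suc t) = A *v xs i t + B *v us i t"
    and lmpc_policy: "\<And>i t. i \<ge> 1 \<Longrightarrow>
         \<exists>v. lmpc_optimal A B (polyhedron Fx bx) (polyhedron Fu bu) Q R N xs us i (xs i t) v
             \<and> us i t = v 0"
    and N1: "N \<ge> 1"
    and j1: "j \<ge> 1"
    and same_cost: "iter_cost Q R xs us (j - 1) = iter_cost Q R xs us j"
  shows "xs (j - 1) = xs j"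
proof -
  interpret lmpc_closed_loop A B "polyhedron Fx bx" "polyhedron Fu bu" Q R N xS xs us
  proof
    show "xs i (Suc t) = A *v xs i t + B *v us i t" for i t
      using traj0_dyn closed_loop_dyn by (cases "i = 0") auto
    show "iter_cost Q R xs us 0 < top"
      unfolding iter_cost_def using traj0_cost stage_cost_nonneg[OF Qpsd Rpd]
      by (subst suminf_ennreal2) auto
  qed (use Qpsd Rpd init traj0_X traj0_U lmpc_policy N1 closed_polyhedron convex_polyhedron in auto)
  show ?thesis by (rule same_iter_cost_same_trajectory[OF j1 same_cost])
qed

end
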